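(* Let $A=\{(x_k,y_k):k\in[\ell]\}\subset\mathbb N^d$, $d=m+n$. Then for all $\bar k\in[\ell]$, $$\mathbb D_{\mathrm{in}}(x_{\bar k},y_{\bar k},T_F(A))\in\mathbb N\quad\text{and}\quad\mathbb D_{\mathrm{out}}(x_{\bar k},y_{\bar k},T_F(A))\in\mathbb N.$$
   Context: $\mathbb N$ is the set of non-negative integers; $[\ell]=\{1,\dots,\ell\}$; $K=\mathbb{R}_+^m\times(-\mathbb{R}_+^n)$. The free disposal hull (FDH) technology is $T_F(A)=(A+K)\cap\mathbb{R}_+^d$. Translation distance functions: $\mathbb D_{\mathrm{in}}(x,y,T)=\sup\{\delta\in\mathbb{R}:(x-\delta1\!\!1_m,y)\in T\}$, $\mathbb D_{\mathrm{out}}(x,y,T)=\sup\{\delta\in\mathbb{R}:(x,y+\delta1\!\!1_n)\in T\}$, where $1\!\!1$ denotes a vector of ones. *)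

theory Defs
  imports "HOL-Analysis.Analysis"
begin

text \<open>Points of R^d with d = m + n are pairs (x,y), x :: real^'m (inputs), y :: real^'n (outputs).\<close>

definition ones :: "real ^ 'a" where
  "ones = (\<chi> i. 1)"

definition cone_K :: "((real ^ 'm) \<times> (real ^ 'n)) set" where
  "cone_K = {(u, v). (\<forall>i. 0 \<le> u $ i) \<and> (\<forall>j. v $ j \<le> 0)}"

definition nonneg_orthant :: "((real ^ 'm) \<times> (real ^ 'n)) set" where
  "nonneg_orthant = {(x, y). (\<forall>i. 0 \<le> x $ i) \<and> (\<forall>j. 0 \<le> y $ j)}"

definition FDH :: "((real ^ 'm) \<times> (real ^ 'n)) set \<Rightarrow> ((real ^ 'm) \<times> (real ^ 'n)) set" where
  "FDH A = {a + c | a c. a \<in> A \<and> c \<in> cone_K} \<inter> nonneg_orthant"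

definition D_in :: "real ^ 'm \<Rightarrow> real ^ 'n \<Rightarrow> ((real ^ 'm) \<times> (real ^ 'n)) set \<Rightarrow> real" where
  "D_in x y T = Sup {\<delta>. (x - \<delta> *\<^sub>R ones, y) \<in> T}"

definition D_out :: "real ^ 'm \<Rightarrow> real ^ 'n \<Rightarrow> ((real ^ 'm) \<times> (real ^ 'n)) set \<Rightarrow> real" where
  "D_out x y T = Sup {\<delta>. (x, y + \<delta> *\<^sub>R ones) \<in> T}"

end

theory Submission
  imports Defs
begin

text \<open>A point lies in T_F(A) iff it is nonnegative and dominated by a single observation
  (a, b) \<in> A, i.e. uses at least a and produces at most b. Hence the input distance of an
  observation (x, y) is the largest of the numbers min_i (x_i - a_i) over the observations with
  b \<ge> y, and the output distance the largest of min_j (b_j - y_j) over those with a \<le> x. For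
  integer data these are maxima of finitely many integers, and they are nonnegative because
  (x, y) itself contributes the value 0.\<close>

definition min_coord :: "real ^ 'a \<Rightarrow> real" where
  "min_coord v = Min (range (\<lambda>i. v $ i))"

lemma min_coord_in_range: "min_coord v \<in> range (\<lambda>i. v $ i)"
  unfolding min_coord_def by (intro Min_in) auto

lemma min_coord_zero [simp]: "min_coord 0 = 0"
  using min_coord_in_range[of 0] by auto

lemma min_coord_Ints: "(\<And>i. v $ i \<in> \<int>) \<Longrightarrow> min_coord v \<in> \<int>"
  using min_coord_in_range[of v] by auto

lemma scaleR_ones_le_iff: "\<delta> *\<^sub>R ones \<le> v \<longleftrightarrow> \<delta> \<le> min_coord v"
  unfolding min_coord_def by (subst Min_ge_iff) (auto simp: less_eq_vec_def ones_def)

lemma mem_nonneg_orthant_iff: "(p, q) \<in> nonneg_orthant \<longleftrightarrow> 0 \<le> p \<and> 0 \<le> q"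
  by (simp add: nonneg_orthant_def less_eq_vec_def)

lemma FDH_iff:
  "(p, q) \<in> FDH A \<longleftrightarrow> (\<exists>(a, b)\<in>A. a \<le> p \<and> q \<le> b) \<and> 0 \<le> p \<and> 0 \<le> q"
proof -
  have "(p, q) \<in> {a + c | a c. a \<in> A \<and> c \<in> cone_K} \<longleftrightarrow> (\<exists>(a, b)\<in>A. a \<le> p \<and> q \<le> b)"
  proof
    assume "(p, q) \<in> {a + c | a c. a \<in> A \<and> c \<in> cone_K}"
    then obtain a b u v where "(a, b) \<in> A" "(u, v) \<in> cone_K" "p = a + u" "q = b + v"
      by auto
    then have "a \<le> p" "q \<le> b" by (auto simp: cone_K_def less_eq_vec_def)
    then show "\<exists>(a, b)\<in>A. a \<le> p \<and> q \<le> b" using \<open>(a, b) \<in> A\<close> by blast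
  next
    assume "\<exists>(a, b)\<in>A. a \<le> p \<and> q \<le> b"
    then obtain a b where "(a, b) \<in> A" "a \<le> p" "q \<le> b" by auto
    moreover have "(p, q) = (a, b) + (p - a, q - b)" by simp
    moreover have "(p - a, q - b) \<in> cone_K"
      using \<open>a \<le> p\<close> \<open>q \<le> b\<close> by (auto simp: cone_K_def less_eq_vec_def)
    ultimately show "(p, q) \<in> {a + c | a c. a \<in> A \<and> c \<in> cone_K}" by blast
  qed
  then show ?thesis
    by (simp add: FDH_def mem_nonneg_orthant_iff)
qed

lemma finite_Collect_pair_image:
  "finite A \<Longrightarrow> finite {f a b | a b. (a, b) \<in> A \<and> P a b}"
  by (rule finite_subset[of _ "(\<lambda>(a, b). f a b) ` A"]) auto

lemma le_diff_scaleR_ones_iff: "a \<le> x - \<delta> *\<^sub>R ones \<longleftrightarrow> \<delta> \<le> min_coord (x - a)"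
  by (metis scaleR_ones_le_iff le_diff_eq add.commute)

lemma add_scaleR_ones_le_iff: "y + \<delta> *\<^sub>R ones \<le> b \<longleftrightarrow> \<delta> \<le> min_coord (b - y)"
  by (metis scaleR_ones_le_iff le_diff_eq add.commute)

lemma D_in_FDH_eq_Max:
  assumes "finite A" and "A \<subseteq> nonneg_orthant" and "(x, y) \<in> A"
  shows "D_in x y (FDH A) = Max {min_coord (x - a) | a b. (a, b) \<in> A \<and> y \<le> b}"
proof -
  let ?C = "{min_coord (x - a) | a b. (a, b) \<in> A \<and> y \<le> b}"
  have "finite ?C" using \<open>finite A\<close> by (rule finite_Collect_pair_image)
  moreover have "?C \<noteq> {}" using \<open>(x, y) \<in> A\<close> by blast
  ultimately have "Max ?C \<in> ?C" by (rule Max_in)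
  then obtain a b where ab: "(a, b) \<in> A" "y \<le> b" and M: "Max ?C = min_coord (x - a)"
    by blast
  have "0 \<le> a" "0 \<le> y"
    using ab(1) \<open>(x, y) \<in> A\<close> \<open>A \<subseteq> nonneg_orthant\<close> by (auto simp: mem_nonneg_orthant_iff)
  have "a \<le> x - Max ?C *\<^sub>R ones"
    using M by (simp add: le_diff_scaleR_ones_iff)
  then have "(x - Max ?C *\<^sub>R ones, y) \<in> FDH A"
    using ab \<open>0 \<le> a\<close> \<open>0 \<le> y\<close> unfolding FDH_iff by (blast intro: order_trans)
  moreover have "\<delta> \<le> Max ?C" if \<delta>: "(x - \<delta> *\<^sub>R ones, y) \<in> FDH A" for \<delta>
  proof -
    obtain a' b' where "(a', b') \<in> A" "a' \<le> x - \<delta> *\<^sub>R ones" "y \<le> b'"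
      using \<delta> unfolding FDH_iff by blast
    then have "\<delta> \<le> min_coord (x - a')" "min_coord (x - a') \<in> ?C"
      by (auto simp: le_diff_scaleR_ones_iff)
    then show ?thesis using \<open>finite ?C\<close> by (meson Max_ge order_trans)
  qed
  ultimately show ?thesis
    unfolding D_in_def by (intro cSup_eq_maximum) auto
qed

lemma D_out_FDH_eq_Max:
  assumes "finite A" and "A \<subseteq> nonneg_orthant" and "(x, y) \<in> A"
  shows "D_out x y (FDH A) = Max {min_coord (b - y) | a b. (a, b) \<in> A \<and> a \<le> x}"
proof -
  let ?C = "{min_coord (b - y) | a b. (a, b) \<in> A \<and> a \<le> x}"
  have "finite ?C" using \<open>finite A\<close> by (rule finite_Collect_pair_image)
  have "0 \<in> ?C" using \<open>(x, y) \<in> A\<close> by force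
  then have "Max ?C \<in> ?C" using \<open>finite ?C\<close> by (intro Max_in) auto
  then obtain a b where ab: "(a, b) \<in> A" "a \<le> x" and M: "Max ?C = min_coord (b - y)"
    by blast
  have "0 \<le> Max ?C" using \<open>0 \<in> ?C\<close> \<open>finite ?C\<close> by simp
  have "0 \<le> x" "0 \<le> y"
    using \<open>(x, y) \<in> A\<close> \<open>A \<subseteq> nonneg_orthant\<close> by (auto simp: mem_nonneg_orthant_iff)
  have "y + Max ?C *\<^sub>R ones \<le> b"
    using M by (simp add: add_scaleR_ones_le_iff)
  moreover have "0 \<le> y + Max ?C *\<^sub>R ones"
    using \<open>0 \<le> y\<close> \<open>0 \<le> Max ?C\<close> by (simp add: less_eq_vec_def ones_def)
  ultimately have "(x, y + Max ?C *\<^sub>R ones) \<in> FDH A"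
    using ab \<open>0 \<le> x\<close> unfolding FDH_iff by blast
  moreover have "\<delta> \<le> Max ?C" if \<delta>: "(x, y + \<delta> *\<^sub>R ones) \<in> FDH A" for \<delta>
  proof -
    obtain a' b' where "(a', b') \<in> A" "a' \<le> x" "y + \<delta> *\<^sub>R ones \<le> b'"
      using \<delta> unfolding FDH_iff by blast
    then have "\<delta> \<le> min_coord (b' - y)" "min_coord (b' - y) \<in> ?C"
      by (auto simp: add_scaleR_ones_le_iff)
    then show ?thesis using \<open>finite ?C\<close> by (meson Max_ge order_trans)
  qed
  ultimately show ?thesis
    unfolding D_out_def by (intro cSup_eq_maximum) auto
qed

lemma Max_Ints_in_Nats:
  fixes C :: "real set"
  assumes "finite C" and "C \<subseteq> \<int>" and "0 \<in> C"
  shows "Max C \<in> \<nat>"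
proof -
  have "Max C \<in> C" using assms by (intro Max_in) auto
  then obtain z where z: "Max C = of_int z" using assms by (auto elim: Ints_cases)
  moreover have "0 \<le> Max C" using assms by simp
  ultimately have "Max C = of_nat (nat z)" by simp
  then show ?thesis by simp
qed

lemma FDH_distances_in_Nats:
  assumes "finite A"
    and Nats: "\<And>a b i j. (a, b) \<in> A \<Longrightarrow> a $ i \<in> \<nat> \<and> b $ j \<in> \<nat>"
    and "(x, y) \<in> A"
  shows "D_in x y (FDH A) \<in> \<nat> \<and> D_out x y (FDH A) \<in> \<nat>"
proof -
  have "0 \<le> a \<and> 0 \<le> b" if "(a, b) \<in> A" for a b
    using Nats[OF that] unfolding less_eq_vec_def by (metis Nats_cases of_nat_0_le_iff zero_index)
  then have "A \<subseteq> nonneg_orthant" by (auto simp: mem_nonneg_orthant_iff)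
  note A = \<open>finite A\<close> this \<open>(x, y) \<in> A\<close>
  have "a $ i \<in> \<int>" "b $ j \<in> \<int>" if "(a, b) \<in> A" for a b i j
    using Nats[OF that, of i j] Nats_subset_Ints by auto
  then have Ints: "min_coord (x - a) \<in> \<int>" "min_coord (b - y) \<in> \<int>" if "(a, b) \<in> A" for a b
    using that \<open>(x, y) \<in> A\<close> by (simp_all add: min_coord_Ints Ints_diff)
  have "D_in x y (FDH A) \<in> \<nat>"
    unfolding D_in_FDH_eq_Max[OF A]
  proof (rule Max_Ints_in_Nats[OF finite_Collect_pair_image[OF \<open>finite A\<close>]])
    show "{min_coord (x - a) | a b. (a, b) \<in> A \<and> y \<le> b} \<subseteq> \<int>" using Ints by blast
    show "0 \<in> {min_coord (x - a) | a b. (a, b) \<in> A \<and> y \<le> b}" using \<open>(x, y) \<in> A\<close> by force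
  qed
  moreover have "D_out x y (FDH A) \<in> \<nat>"
    unfolding D_out_FDH_eq_Max[OF A]
  proof (rule Max_Ints_in_Nats[OF finite_Collect_pair_image[OF \<open>finite A\<close>]])
    show "{min_coord (b - y) | a b. (a, b) \<in> A \<and> a \<le> x} \<subseteq> \<int>" using Ints by blast
    show "0 \<in> {min_coord (b - y) | a b. (a, b) \<in> A \<and> a \<le> x}" using \<open>(x, y) \<in> A\<close> by force
  qed
  ultimately show ?thesis ..
qed

theorem mainTheorem9:
  fixes l :: nat and xs :: "nat \<Rightarrow> real ^ 'm" and ys :: "nat \<Rightarrow> real ^ 'n" and kb :: nat
  assumes "\<And>k i. k \<in> {1..l} \<Longrightarrow> xs k $ i \<in> \<nat>"
      and "\<And>k j. k \<in> {1..l} \<Longrightarrow> ys k $ j \<in> \<nat>"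
      and "kb \<in> {1..l}"
  shows "D_in (xs kb) (ys kb) (FDH ((\<lambda>k. (xs k, ys k)) ` {1..l})) \<in> \<nat>
       \<and> D_out (xs kb) (ys kb) (FDH ((\<lambda>k. (xs k, ys k)) ` {1..l})) \<in> \<nat>"
  by (rule FDH_distances_in_Nats) (use assms in auto)

end
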